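(* Let $\Omega$ be a Polish space. For every capacity $c$ on $\mathcal{L}$, the non-negative part $K_+$ of the unit ball of $L^1(c)^*$ is compact metrizable for the weak* topology $\sigma(L^1(c)^*,L^1(c))$.
   Context: $\mathcal{L}\subset\mathcal{C}_b(\Omega)$ is a linear subspace which is a vector lattice, contains the constants and generates the topology. A capacity on $\mathcal{L}$ is a seminorm $c$ with $c(f)\le c(g)$ whenever $|f|\le|g|$ and $\inf_n c(f_n)=0$ for $f_n\in\mathcal{L}$ decreasing to $0$; it is extended to all functions by $c(f)=\sup\{c(\varphi):\varphi\in\mathcal{L},0\le\varphi\le f\}$ for $f\ge0$ l.s.c. and $c(g)=\inf\{c(f):f\text{ l.s.c.},f\ge|g|\}$. $L^1(c)$ is the Banach space obtained as the quotient by $c$-null elements of the $c$-closure of $\mathcal{L}$ in $\{g:c(g)<\infty\}$. Order on $L^1(c)$: $X\ge0$ iff some $f_n\in\mathcal{L}$, $f_n\ge0$, satisfy $c(g-f_n)\to0$ for every representative $g$ of $X$. $K_+$ is the set of non-negative continuous linear forms on $L^1(c)$ of norm $\le1$. *)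

theory Defs
  imports "HOL-Analysis.Analysis"
begin

definition admissible_space :: "('a::topological_space \<Rightarrow> real) set \<Rightarrow> bool" where
  "admissible_space L \<longleftrightarrow>
     (\<forall>f\<in>L. continuous_on UNIV f \<and> bounded (range f)) \<and>
     (\<forall>f\<in>L. \<forall>g\<in>L. (\<lambda>x. f x + g x) \<in> L) \<and>
     (\<forall>f\<in>L. \<forall>a::real. (\<lambda>x. a * f x) \<in> L) \<and>
     (\<forall>f\<in>L. (\<lambda>x. max (f x) 0) \<in> L) \<and>
     (\<forall>a::real. (\<lambda>x. a) \<in> L) \<and>
     topology_generated_by {f -` U | f U. f \<in> L \<and> open U} = (euclidean :: 'a topology)"

definition capacity :: "('a \<Rightarrow> real) set \<Rightarrow> (('a \<Rightarrow> real) \<Rightarrow> real) \<Rightarrow> bool" where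
  "capacity L c \<longleftrightarrow>
     (\<forall>f\<in>L. \<forall>g\<in>L. c (\<lambda>x. f x + g x) \<le> c f + c g) \<and>
     (\<forall>f\<in>L. \<forall>a::real. c (\<lambda>x. a * f x) = \<bar>a\<bar> * c f) \<and>
     (\<forall>f\<in>L. 0 \<le> c f) \<and>
     (\<forall>f\<in>L. \<forall>g\<in>L. (\<forall>x. \<bar>f x\<bar> \<le> \<bar>g x\<bar>) \<longrightarrow> c f \<le> c g) \<and>
     (\<forall>F::nat \<Rightarrow> 'a \<Rightarrow> real. (\<forall>n. F n \<in> L) \<and> (\<forall>n x. F (Suc n) x \<le> F n x) \<and>
         (\<forall>x. (\<lambda>n. F n x) \<longlonglongrightarrow> 0) \<longrightarrow> (INF n. c (F n)) = 0)"

definition lsc :: "('a::topological_space \<Rightarrow> ereal) \<Rightarrow> bool" where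
  "lsc f \<longleftrightarrow> (\<forall>t. open {x. t < f x})"

definition cap_lsc :: "('a \<Rightarrow> real) set \<Rightarrow> (('a \<Rightarrow> real) \<Rightarrow> real) \<Rightarrow> ('a \<Rightarrow> ereal) \<Rightarrow> ereal" where
  "cap_lsc L c f = (SUP \<phi>\<in>{\<phi>\<in>L. \<forall>x. 0 \<le> \<phi> x \<and> ereal (\<phi> x) \<le> f x}. ereal (c \<phi>))"

definition cap_ext :: "('a::topological_space \<Rightarrow> real) set \<Rightarrow> (('a \<Rightarrow> real) \<Rightarrow> real) \<Rightarrow> ('a \<Rightarrow> real) \<Rightarrow> ereal" where
  "cap_ext L c g = (INF f\<in>{f. lsc f \<and> (\<forall>x. ereal \<bar>g x\<bar> \<le> f x)}. cap_lsc L c f)"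

definition L1_dom :: "('a::topological_space \<Rightarrow> real) set \<Rightarrow> (('a \<Rightarrow> real) \<Rightarrow> real) \<Rightarrow> ('a \<Rightarrow> real) set" where
  "L1_dom L c = {g. cap_ext L c g < \<infinity> \<and>
       (\<forall>e>0. \<exists>f\<in>L. cap_ext L c (\<lambda>x. g x - f x) < ereal e)}"

definition L1_rel :: "('a::topological_space \<Rightarrow> real) set \<Rightarrow> (('a \<Rightarrow> real) \<Rightarrow> real) \<Rightarrow> (('a \<Rightarrow> real) \<times> ('a \<Rightarrow> real)) set" where
  "L1_rel L c = {(g, h). g \<in> L1_dom L c \<and> h \<in> L1_dom L c \<and> cap_ext L c (\<lambda>x. g x - h x) = 0}"

definition L1 :: "('a::topological_space \<Rightarrow> real) set \<Rightarrow> (('a \<Rightarrow> real) \<Rightarrow> real) \<Rightarrow> ('a \<Rightarrow> real) set set" where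
  "L1 L c = L1_dom L c // L1_rel L c"

definition L1_class :: "('a::topological_space \<Rightarrow> real) set \<Rightarrow> (('a \<Rightarrow> real) \<Rightarrow> real) \<Rightarrow> ('a \<Rightarrow> real) \<Rightarrow> ('a \<Rightarrow> real) set" where
  "L1_class L c g = L1_rel L c `` {g}"

definition L1_nonneg :: "('a::topological_space \<Rightarrow> real) set \<Rightarrow> (('a \<Rightarrow> real) \<Rightarrow> real) \<Rightarrow> ('a \<Rightarrow> real) set \<Rightarrow> bool" where
  "L1_nonneg L c X \<longleftrightarrow> (\<exists>F::nat \<Rightarrow> 'a \<Rightarrow> real. (\<forall>n. F n \<in> L \<and> (\<forall>x. 0 \<le> F n x)) \<and>
       (\<forall>g\<in>X. (\<lambda>n. cap_ext L c (\<lambda>x. g x - F n x)) \<longlonglongrightarrow> 0))"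

text \<open>K_+: non-negative continuous linear forms on L^1(c) of norm at most 1,
  represented as (extensional) real functions on the set L1 L c.
  The norm of the class of g is c(g).\<close>
definition Kplus :: "('a::topological_space \<Rightarrow> real) set \<Rightarrow> (('a \<Rightarrow> real) \<Rightarrow> real) \<Rightarrow> (('a \<Rightarrow> real) set \<Rightarrow> real) set" where
  "Kplus L c = {\<phi>. \<phi> \<in> extensional (L1 L c) \<and>
     (\<forall>g\<in>L1_dom L c. \<forall>h\<in>L1_dom L c. \<forall>a b::real.
        \<phi> (L1_class L c (\<lambda>x. a * g x + b * h x)) = a * \<phi> (L1_class L c g) + b * \<phi> (L1_class L c h)) \<and>
     (\<forall>g\<in>L1_dom L c. ereal \<bar>\<phi> (L1_class L c g)\<bar> \<le> cap_ext L c g) \<and>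
     (\<forall>X\<in>L1 L c. L1_nonneg L c X \<longrightarrow> 0 \<le> \<phi> X)}"

text \<open>The weak* topology sigma(L^1(c)^*, L^1(c)): pointwise convergence on L^1(c).\<close>
definition weak_star :: "('a::topological_space \<Rightarrow> real) set \<Rightarrow> (('a \<Rightarrow> real) \<Rightarrow> real) \<Rightarrow> (('a \<Rightarrow> real) set \<Rightarrow> real) topology" where
  "weak_star L c = product_topology (\<lambda>_. euclideanreal) (L1 L c)"

end

theory Submission
  imports Defs
begin

text \<open>
  Every element of \<open>K\<^sub>+\<close> is bounded on the class of \<open>g\<close> by \<open>c(g)\<close>, and the defining
  conditions of \<open>K\<^sub>+\<close> are pointwise closed; so \<open>K\<^sub>+\<close> is a closed subset of a product of
  compact intervals and compact by Tychonoff.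

  For metrizability, a countable base of \<open>\<Omega>\<close> together with the fact that \<open>\<L>\<close> generates the
  topology yields countably many bump functions in \<open>\<L>\<close>; the lattice terms with rational
  coefficients over them form a countable min-closed set \<open>D \<subseteq> \<L>\<close> such that every \<open>f \<in> \<L>\<close>
  is the pointwise limit of a decreasing sequence in \<open>D\<close> above \<open>f\<close>. By the Daniell property
  of \<open>c\<close> this sequence converges to \<open>f\<close> in capacity. Elements of \<open>K\<^sub>+\<close> are \<open>c\<close>-Lipschitz and
  \<open>\<L>\<close> is \<open>c\<close>-dense in \<open>L\<^sup>1(c)\<close>, so they are determined by their values on \<open>D\<close>: evaluation at
  \<open>D\<close> is a continuous injection of the compact space \<open>K\<^sub>+\<close> into the metrizable space \<open>\<real>\<^sup>D\<close>.
\<close>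

lemma closedin_Collect_all:
  assumes "\<And>i. closedin X {x \<in> topspace X. P i x}"
  shows "closedin X {x \<in> topspace X. \<forall>i. P i x}"
proof -
  have "{x \<in> topspace X. \<forall>i. P i x} = \<Inter> (range (\<lambda>i. {x \<in> topspace X. P i x}))"
    by auto
  then show ?thesis
    using assms by (auto intro: closedin_Inter)
qed

lemma closedin_Collect_imp:
  assumes "P \<Longrightarrow> closedin X {x \<in> topspace X. Q x}"
  shows "closedin X {x \<in> topspace X. P \<longrightarrow> Q x}"
  using assms by (cases P) simp_all

lemma closedin_Collect_conj:
  assumes "closedin X {x \<in> topspace X. P x}" "closedin X {x \<in> topspace X. Q x}"
  shows "closedin X {x \<in> topspace X. P x \<and> Q x}"
proof -
  have "{x \<in> topspace X. P x \<and> Q x} = {x \<in> topspace X. P x} \<inter> {x \<in> topspace X. Q x}"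
    by auto
  then show ?thesis
    using assms by auto
qed

lemma continuous_injection_imp_metrizable_space:
  assumes "compact_space X" "metrizable_space Y"
    and "continuous_map X Y f" "inj_on f (topspace X)"
  shows "metrizable_space X"
proof -
  have "closed_map X Y f"
    using assms by (intro continuous_imp_closed_map_gen Hausdorff_imp_kc_space metrizable_imp_Hausdorff_space)
  then have "embedding_map X Y f"
    using assms by (intro injective_closed_imp_embedding_map)
  then have "X homeomorphic_space subtopology Y (f ` topspace X)"
    by (rule embedding_map_imp_homeomorphic_space)
  then show ?thesis
    using assms(2) homeomorphic_metrizable_space metrizable_space_subtopology by blast
qed

lemma affine_bump_above:
  fixes q k :: real
  assumes "0 \<le> b" "b \<le> 1" "q \<le> f \<Longrightarrow> b = 0" "f \<le> k" "q \<le> k"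
  shows "f \<le> k + (q - k) * b"
proof (cases "f < q")
  case True
  have "(q - k) * 1 \<le> (q - k) * b"
    using assms by (intro mult_left_mono_neg) auto
  then show ?thesis
    using True by simp
next
  case False
  then show ?thesis
    using assms by simp
qed

lemma decreasing_approximation_from_above:
  fixes f :: "'a \<Rightarrow> real"
  assumes "countable D"
    and min_closed: "\<And>d e. d \<in> D \<Longrightarrow> e \<in> D \<Longrightarrow> (\<lambda>y. min (d y) (e y)) \<in> D"
    and above: "\<And>x \<epsilon>. \<epsilon> > 0 \<Longrightarrow> \<exists>d\<in>D. (\<forall>y. f y \<le> d y) \<and> d x < f x + \<epsilon>"
  obtains d where "\<And>n. d n \<in> D" "\<And>n y. f y \<le> d n y" "\<And>n y. d (Suc n) y \<le> d n y"
    "\<And>y. (\<lambda>n. d n y) \<longlonglongrightarrow> f y"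
proof -
  define S where "S = {d \<in> D. \<forall>y. f y \<le> d y}"
  have "countable S"
    unfolding S_def using \<open>countable D\<close> by simp
  have "S \<noteq> {}"
    using above[of 1 undefined] unfolding S_def by auto
  define s where "s = from_nat_into S"
  have s: "s n \<in> S" for n
    unfolding s_def using \<open>S \<noteq> {}\<close> by (rule from_nat_into)
  define d where "d = rec_nat (s 0) (\<lambda>n dn y. min (dn y) (s (Suc n) y))"
  have d_0: "d 0 = s 0" and d_Suc: "d (Suc n) = (\<lambda>y. min (d n y) (s (Suc n) y))" for n
    unfolding d_def by simp_all
  have d_S: "d n \<in> S" for n
    using s by (induction n) (auto simp: d_0 d_Suc S_def min_closed)
  have d_le_s: "d n y \<le> s k y" if "k \<le> n" for n k y
    using that by (induction n) (auto simp: d_0 d_Suc le_Suc_eq)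
  have lim: "(\<lambda>n. d n y) \<longlonglongrightarrow> f y" for y
  proof (rule LIMSEQ_I)
    fix \<epsilon> :: real
    assume "\<epsilon> > 0"
    then obtain e where e: "e \<in> S" "e y < f y + \<epsilon>"
      using above unfolding S_def by blast
    then have "s (to_nat_on S e) = e"
      unfolding s_def using \<open>countable S\<close> by simp
    then have "norm (d n y - f y) < \<epsilon>" if "to_nat_on S e \<le> n" for n
      using d_le_s[OF that, of y] d_S[of n] e(2) unfolding S_def by auto
    then show "\<exists>n0. \<forall>n\<ge>n0. norm (d n y - f y) < \<epsilon>"
      by blast
  qed
  show ?thesis
    using d_S lim by (intro that[of d]) (auto simp: S_def d_Suc)
qed

datatype lattice_term =
  Atom nat | Const rat | Plus lattice_term lattice_term | Scale rat lattice_term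
  | Meet lattice_term lattice_term

instance lattice_term :: countable
  by countable_datatype

fun eval_lattice_term :: "(nat \<Rightarrow> 'a \<Rightarrow> real) \<Rightarrow> lattice_term \<Rightarrow> 'a \<Rightarrow> real" where
  "eval_lattice_term gs (Atom n) = gs n"
| "eval_lattice_term gs (Const q) = (\<lambda>y. real_of_rat q)"
| "eval_lattice_term gs (Plus s t) = (\<lambda>y. eval_lattice_term gs s y + eval_lattice_term gs t y)"
| "eval_lattice_term gs (Scale q t) = (\<lambda>y. real_of_rat q * eval_lattice_term gs t y)"
| "eval_lattice_term gs (Meet s t) =
     (\<lambda>y. min (eval_lattice_term gs s y) (eval_lattice_term gs t y))"

locale admissible_lattice =
  fixes L :: "('a::topological_space \<Rightarrow> real) set"
  assumes admissible: "admissible_space L"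
begin

lemma L_add: "f \<in> L \<Longrightarrow> g \<in> L \<Longrightarrow> (\<lambda>x. f x + g x) \<in> L"
  and L_scale: "f \<in> L \<Longrightarrow> (\<lambda>x. a * f x) \<in> L"
  and L_pos_part: "f \<in> L \<Longrightarrow> (\<lambda>x. max (f x) 0) \<in> L"
  and L_const: "(\<lambda>x. a) \<in> L"
  and L_continuous: "f \<in> L \<Longrightarrow> continuous_on UNIV f"
  and L_bounded: "f \<in> L \<Longrightarrow> bounded (range f)"
  and L_generates: "topology_generated_by {f -` U | f U. f \<in> L \<and> open U} = euclidean"
  using admissible unfolding admissible_space_def by blast+

lemma L_diff: "f \<in> L \<Longrightarrow> g \<in> L \<Longrightarrow> (\<lambda>x. f x - g x) \<in> L"
  using L_add[of f "\<lambda>x. -1 * g x"] L_scale[of g "-1"] by simp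

lemma L_abs: "f \<in> L \<Longrightarrow> (\<lambda>x. \<bar>f x\<bar>) \<in> L"
proof -
  assume "f \<in> L"
  then have "(\<lambda>x. max (f x) 0 + max (-1 * f x) 0) \<in> L"
    by (intro L_add L_pos_part L_scale)
  moreover have "(\<lambda>x. max (f x) 0 + max (-1 * f x) 0) = (\<lambda>x. \<bar>f x\<bar>)"
    by (auto simp: fun_eq_iff)
  ultimately show ?thesis
    by simp
qed

lemma L_min: "f \<in> L \<Longrightarrow> g \<in> L \<Longrightarrow> (\<lambda>x. min (f x) (g x)) \<in> L"
proof -
  assume "f \<in> L" "g \<in> L"
  then have "(\<lambda>x. f x - max (f x - g x) 0) \<in> L"
    by (intro L_diff L_pos_part)
  moreover have "(\<lambda>x. f x - max (f x - g x) 0) = (\<lambda>x. min (f x) (g x))"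
    by (auto simp: fun_eq_iff)
  ultimately show ?thesis
    by simp
qed

lemma eval_lattice_term_in_L: "(\<And>n. gs n \<in> L) \<Longrightarrow> eval_lattice_term gs t \<in> L"
  by (induction t) (simp_all add: L_add L_scale L_min L_const)

definition bump :: "'a set \<Rightarrow> 'a \<Rightarrow> ('a \<Rightarrow> real) \<Rightarrow> bool" where
  "bump W x b \<longleftrightarrow> b \<in> L \<and> (\<forall>y. 0 \<le> b y \<and> b y \<le> 1) \<and> b x = 1 \<and> (\<forall>y. y \<notin> W \<longrightarrow> b y = 0)"

lemma bump_preimage:
  assumes "f \<in> L" "open U" "f x \<in> U"
  shows "\<exists>b. bump (f -` U) x b"
proof -
  obtain r where r: "r > 0" "ball (f x) r \<subseteq> U"
    using assms open_contains_ball by blast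
  define b where "b = (\<lambda>y. max (1 + (-1 / r) * \<bar>f y - f x\<bar>) 0)"
  have "b \<in> L"
    unfolding b_def using assms(1) by (intro L_pos_part L_add L_const L_scale L_abs L_diff)
  moreover have "b y = 0" if "y \<notin> f -` U" for y
  proof -
    have "f y \<notin> ball (f x) r"
      using that r by auto
    then have "r \<le> \<bar>f y - f x\<bar>"
      by (simp add: dist_real_def abs_minus_commute)
    then show ?thesis
      unfolding b_def using r by (simp add: field_simps)
  qed
  moreover have "0 \<le> b y \<and> b y \<le> 1" for y
    unfolding b_def using r by auto
  ultimately show ?thesis
    unfolding bump_def b_def by auto
qed

lemma exists_bump:
  assumes "open W" "x \<in> W"
  shows "\<exists>b. bump W x b"
proof -
  have "openin (topology_generated_by {f -` U | f U. f \<in> L \<and> open U}) W"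
    using assms(1) L_generates by simp
  then have "generate_topology_on {f -` U | f U. f \<in> L \<and> open U} W"
    by (simp add: openin_topology_generated_by_iff)
  then show ?thesis
    using assms(2)
  proof (induction arbitrary: x rule: generate_topology_on.induct)
    case Empty
    then show ?case by simp
  next
    case (Int V W)
    then obtain b1 b2 where "bump V x b1" "bump W x b2"
      by blast
    then have "bump (V \<inter> W) x (\<lambda>y. min (b1 y) (b2 y))"
      unfolding bump_def by (auto simp: L_min min_le_iff_disj)
    then show ?case by blast
  next
    case (UN K)
    then obtain W b where "W \<in> K" "bump W x b"
      by blast
    then have "bump (\<Union>K) x b"
      unfolding bump_def by blast
    then show ?case by blast
  next
    case (Basis W)
    then obtain f U where "W = f -` U" "f \<in> L" "open U" "f x \<in> U"
      by blast
    then show ?case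
      using bump_preimage by blast
  qed
qed

end

text \<open>
  One function per pair of basic open sets suffices for a countable family of approximate
  bumps; the value \<open>1\<close> at the point is recovered below as \<open>min (2 g) 1\<close>.
\<close>
lemma countable_bump_family:
  fixes L :: "('a::second_countable_topology \<Rightarrow> real) set"
  assumes "admissible_space L"
  obtains G where "countable G" "G \<subseteq> L"
    "\<And>W x. open W \<Longrightarrow> x \<in> W \<Longrightarrow>
       \<exists>g\<in>G. (\<forall>y. 0 \<le> g y \<and> g y \<le> 1) \<and> 1/2 < g x \<and> (\<forall>y. y \<notin> W \<longrightarrow> g y = 0)"
proof -
  interpret admissible_lattice L
    by (rule admissible_lattice.intro[OF assms])
  obtain B :: "'a set set" where B: "countable B" "topological_basis B"
    using ex_countable_basis by blast
  define P where "P p g \<longleftrightarrow> g \<in> L \<and> (\<forall>y. 0 \<le> g y \<and> g y \<le> 1) \<and>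
      (\<forall>y. y \<notin> fst p \<longrightarrow> g y = 0) \<and> (\<forall>y\<in>snd p. 1/2 < g y)" for p g
  define pick where "pick p = (SOME g. P p g)" for p
  define G where "G = pick ` {p \<in> B \<times> B. \<exists>g. P p g}"
  have pick: "P p (pick p)" if "\<exists>g. P p g" for p
    unfolding pick_def using that by (rule someI_ex)
  have "countable (B \<times> B)"
    using B(1) by simp
  then have "countable {p \<in> B \<times> B. \<exists>g. P p g}"
    by (rule countable_subset[rotated]) blast
  then have "countable G"
    unfolding G_def by simp
  moreover have "G \<subseteq> L"
    unfolding G_def using pick unfolding P_def by blast
  moreover have "\<exists>g\<in>G. (\<forall>y. 0 \<le> g y \<and> g y \<le> 1) \<and> 1/2 < g x \<and> (\<forall>y. y \<notin> W \<longrightarrow> g y = 0)"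
    if W: "open W" "x \<in> W" for W x
  proof -
    obtain V where V: "V \<in> B" "x \<in> V" "V \<subseteq> W"
      using topological_basisE[OF B(2) W] by blast
    then obtain b where b: "bump V x b"
      using exists_bump topological_basis_open[OF B(2)] by blast
    then have "continuous_on UNIV b"
      unfolding bump_def using L_continuous by blast
    then have "open {y. 1/2 < b y}"
      by (rule open_Collect_less[OF continuous_on_const])
    moreover have "x \<in> {y. 1/2 < b y}"
      using b unfolding bump_def by simp
    ultimately obtain V' where V': "V' \<in> B" "x \<in> V'" "V' \<subseteq> {y. 1/2 < b y}"
      using topological_basisE[OF B(2)] by blast
    have "P (V, V') b"
      using b V' unfolding P_def bump_def by auto
    then have "P (V, V') (pick (V, V'))" "pick (V, V') \<in> G"
      using pick V(1) V'(1) unfolding G_def by blast+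
    then show ?thesis
      using V(3) V'(2) unfolding P_def by (intro bexI[of _ "pick (V, V')"]) auto
  qed
  ultimately show ?thesis
    by (rule that)
qed

locale bump_enumeration = admissible_lattice L for L :: "('a::topological_space \<Rightarrow> real) set" +
  fixes gs :: "nat \<Rightarrow> 'a \<Rightarrow> real"
  assumes gs_in_L: "gs n \<in> L"
    and gs_bump: "open W \<Longrightarrow> x \<in> W \<Longrightarrow>
       \<exists>n. (\<forall>y. 0 \<le> gs n y \<and> gs n y \<le> 1) \<and> 1/2 < gs n x \<and> (\<forall>y. y \<notin> W \<longrightarrow> gs n y = 0)"
begin

abbreviation ev :: "lattice_term \<Rightarrow> 'a \<Rightarrow> real" where
  "ev \<equiv> eval_lattice_term gs"

lemma ev_in_L: "ev t \<in> L"
  using eval_lattice_term_in_L gs_in_L by blast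

lemma ev_bump:
  assumes "open W" "x \<in> W"
  obtains t where "\<And>y. 0 \<le> ev t y" "\<And>y. ev t y \<le> 1" "ev t x = 1" "\<And>y. y \<notin> W \<Longrightarrow> ev t y = 0"
proof -
  obtain n where n: "\<forall>y. 0 \<le> gs n y \<and> gs n y \<le> 1" "1/2 < gs n x" "\<forall>y. y \<notin> W \<longrightarrow> gs n y = 0"
    using gs_bump[OF assms] by blast
  have "ev (Meet (Scale 2 (Atom n)) (Const 1)) y = min (2 * gs n y) 1" for y
    by simp
  then show ?thesis
    using that[of "Meet (Scale 2 (Atom n)) (Const 1)"] n by auto
qed

lemma ev_above:
  assumes "f \<in> L" "\<epsilon> > 0"
  shows "\<exists>t. (\<forall>y. f y \<le> ev t y) \<and> ev t x < f x + \<epsilon>"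
proof -
  obtain q where q: "f x < real_of_rat q" "real_of_rat q < f x + \<epsilon>"
    using of_rat_dense[of "f x" "f x + \<epsilon>"] assms(2) by auto
  obtain B where B: "\<And>y. \<bar>f y\<bar> \<le> B"
    using L_bounded[OF assms(1)] unfolding bounded_iff by auto
  define k :: nat where "k = nat \<lceil>max B (real_of_rat q)\<rceil>"
  have k: "B \<le> real k" "real_of_rat q \<le> real k"
    unfolding k_def by linarith+
  have "open {y. f y < real_of_rat q}"
    using L_continuous[OF assms(1)] by (auto intro: open_Collect_less continuous_on_const)
  then obtain t where t: "\<And>y. 0 \<le> ev t y" "\<And>y. ev t y \<le> 1" "ev t x = 1"
    "\<And>y. \<not> f y < real_of_rat q \<Longrightarrow> ev t y = 0"
    using ev_bump q(1) by (metis mem_Collect_eq)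
  define s where "s = Plus (Const (of_nat k)) (Scale (q - of_nat k) t)"
  have ev_s: "ev s y = real k + (real_of_rat q - real k) * ev t y" for y
    unfolding s_def by (simp add: of_rat_diff)
  have "f y \<le> ev s y" for y
    unfolding ev_s using t k B[of y] by (intro affine_bump_above) auto
  moreover have "ev s x < f x + \<epsilon>"
    unfolding ev_s using t(3) q by simp
  ultimately show ?thesis
    by blast
qed

end

lemma countable_approximating_sublattice:
  fixes L :: "('a::second_countable_topology \<Rightarrow> real) set"
  assumes "admissible_space L"
  obtains D where "countable D" "D \<subseteq> L"
    "\<And>d e. d \<in> D \<Longrightarrow> e \<in> D \<Longrightarrow> (\<lambda>y. min (d y) (e y)) \<in> D"
    "\<And>f x \<epsilon>. f \<in> L \<Longrightarrow> \<epsilon> > 0 \<Longrightarrow> \<exists>d\<in>D. (\<forall>y. f y \<le> d y) \<and> d x < f x + \<epsilon>"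
proof -
  obtain G where G: "countable G" "G \<subseteq> L"
    "\<And>W x. open W \<Longrightarrow> x \<in> W \<Longrightarrow>
       \<exists>g\<in>G. (\<forall>y. 0 \<le> g y \<and> g y \<le> 1) \<and> 1/2 < g x \<and> (\<forall>y. y \<notin> W \<longrightarrow> g y = 0)"
    using countable_bump_family[OF assms] by blast
  have "G \<noteq> {}"
    using G(3)[of UNIV undefined] by auto
  interpret bump_enumeration L "from_nat_into G"
  proof
    show "admissible_space L" by (rule assms)
    show "from_nat_into G n \<in> L" for n
      using from_nat_into[OF \<open>G \<noteq> {}\<close>] G(2) by blast
    show "\<exists>n. (\<forall>y. 0 \<le> from_nat_into G n y \<and> from_nat_into G n y \<le> 1) \<and> 1/2 < from_nat_into G n x \<and>
        (\<forall>y. y \<notin> W \<longrightarrow> from_nat_into G n y = 0)" if "open W" "x \<in> W" for W x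
      using G(3)[OF that] from_nat_into_surj[OF G(1)] by metis
  qed
  show ?thesis
  proof (rule that[of "range ev"])
    show "range ev \<subseteq> L"
      using ev_in_L by blast
    show "(\<lambda>y. min (d y) (e y)) \<in> range ev" if de: "d \<in> range ev" "e \<in> range ev" for d e
    proof -
      obtain s t where "d = ev s" "e = ev t"
        using de by blast
      then have "(\<lambda>y. min (d y) (e y)) = ev (Meet s t)"
        by simp
      then show ?thesis
        by (metis rangeI)
    qed
    show "\<exists>d\<in>range ev. (\<forall>y. f y \<le> d y) \<and> d x < f x + \<epsilon>" if "f \<in> L" "\<epsilon> > 0" for f x \<epsilon>
      using ev_above[OF that] by blast
  qed simp
qed

lemma topspace_weak_star: "topspace (weak_star L c) = extensional (L1 L c)"
  unfolding weak_star_def topspace_product_topology by (simp add: PiE_def)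

lemma continuous_map_weak_star_eval:
  "continuous_map (weak_star L c) euclideanreal (\<lambda>\<phi>. \<phi> X)"
proof (cases "X \<in> L1 L c")
  case True
  then show ?thesis
    unfolding weak_star_def by (rule continuous_map_product_projection)
next
  case False
  have "continuous_map (weak_star L c) euclideanreal (\<lambda>\<phi>. undefined)"
    by simp
  then show ?thesis
  proof (rule continuous_map_eq)
    fix \<phi>
    assume "\<phi> \<in> topspace (weak_star L c)"
    then show "undefined = \<phi> X"
      using False by (simp add: topspace_weak_star extensional_def)
  qed
qed

text \<open>The defining conditions, phrased as preimages of closed sets under evaluation maps.\<close>
lemma Kplus_eq_Collect:
  "Kplus L c = {\<phi> \<in> topspace (weak_star L c).
     (\<forall>g h a b. g \<in> L1_dom L c \<longrightarrow> h \<in> L1_dom L c \<longrightarrow>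
        \<phi> (L1_class L c (\<lambda>x. a * g x + b * h x)) = a * \<phi> (L1_class L c g) + b * \<phi> (L1_class L c h)) \<and>
     (\<forall>g. g \<in> L1_dom L c \<longrightarrow> \<phi> (L1_class L c g) \<in> {t. ereal \<bar>t\<bar> \<le> cap_ext L c g}) \<and>
     (\<forall>X. X \<in> L1 L c \<longrightarrow> L1_nonneg L c X \<longrightarrow> \<phi> X \<in> {0..})}"
  unfolding Kplus_def topspace_weak_star by auto

lemma closedin_Kplus: "closedin (weak_star L c) (Kplus L c)"
proof -
  have "closed {t::real. ereal \<bar>t\<bar> \<le> C}" for C
    by (intro closed_Collect_le continuous_intros continuous_on_ereal)
  then show ?thesis
    unfolding Kplus_eq_Collect
    by (intro closedin_Collect_conj closedin_Collect_all closedin_Collect_imp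
        closedin_continuous_maps_eq[where Y=euclideanreal]
        closedin_continuous_map_preimage[where Y=euclideanreal]
        continuous_map_add continuous_map_real_mult_left continuous_map_weak_star_eval)
       (auto simp: closed_closedin [symmetric])
qed

lemma L1E:
  assumes "X \<in> L1 L c"
  obtains g where "g \<in> L1_dom L c" "X = L1_class L c g"
  using assms unfolding L1_def L1_class_def quotient_def by blast

lemma Kplus_linear:
  "\<phi> \<in> Kplus L c \<Longrightarrow> g \<in> L1_dom L c \<Longrightarrow> h \<in> L1_dom L c \<Longrightarrow>
    \<phi> (L1_class L c (\<lambda>x. a * g x + b * h x)) = a * \<phi> (L1_class L c g) + b * \<phi> (L1_class L c h)"
  and Kplus_bounded:
  "\<phi> \<in> Kplus L c \<Longrightarrow> g \<in> L1_dom L c \<Longrightarrow> ereal \<bar>\<phi> (L1_class L c g)\<bar> \<le> cap_ext L c g"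
  and Kplus_extensional: "\<phi> \<in> Kplus L c \<Longrightarrow> \<phi> \<in> extensional (L1 L c)"
  unfolding Kplus_def by blast+

lemma Kplus_subset_box:
  "\<exists>r. Kplus L c \<subseteq> (\<Pi>\<^sub>E X\<in>L1 L c. {-r X..r X})"
proof -
  define rep where "rep X = (SOME g. g \<in> L1_dom L c \<and> X = L1_class L c g)" for X
  have rep: "rep X \<in> L1_dom L c \<and> X = L1_class L c (rep X)" if "X \<in> L1 L c" for X
  proof -
    have "\<exists>g. g \<in> L1_dom L c \<and> X = L1_class L c g"
      using L1E[OF that] by blast
    then show ?thesis
      unfolding rep_def by (rule someI_ex)
  qed
  have bound: "\<bar>\<phi> X\<bar> \<le> real_of_ereal (cap_ext L c (rep X))" if "\<phi> \<in> Kplus L c" "X \<in> L1 L c" for \<phi> X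
  proof -
    have "ereal \<bar>\<phi> X\<bar> \<le> cap_ext L c (rep X)"
      using Kplus_bounded[OF that(1)] rep[OF that(2)] by metis
    moreover have "cap_ext L c (rep X) < \<infinity>"
      using rep[OF that(2)] unfolding L1_dom_def by blast
    ultimately show ?thesis
      by (cases "cap_ext L c (rep X)") auto
  qed
  have "\<phi> \<in> (\<Pi>\<^sub>E X\<in>L1 L c. {-real_of_ereal (cap_ext L c (rep X))..real_of_ereal (cap_ext L c (rep X))})"
    if "\<phi> \<in> Kplus L c" for \<phi>
    using bound[OF that] Kplus_extensional[OF that] by (auto simp: PiE_iff abs_le_iff minus_le_iff)
  then show ?thesis
    by (intro exI[of _ "\<lambda>X. real_of_ereal (cap_ext L c (rep X))"] subsetI)
qed

lemma compactin_Kplus: "compactin (weak_star L c) (Kplus L c)"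
proof -
  obtain r where "Kplus L c \<subseteq> (\<Pi>\<^sub>E X\<in>L1 L c. {-r X..r X})"
    using Kplus_subset_box by blast
  moreover have "compactin (weak_star L c) (\<Pi>\<^sub>E X\<in>L1 L c. {-r X..r X})"
    unfolding weak_star_def by (simp add: compactin_PiE)
  ultimately show ?thesis
    using closedin_Kplus closed_compactin by blast
qed

locale lattice_capacity = admissible_lattice L for L :: "('a::topological_space \<Rightarrow> real) set" +
  fixes c :: "('a \<Rightarrow> real) \<Rightarrow> real"
  assumes capacity: "capacity L c"
begin

lemma c_scale: "f \<in> L \<Longrightarrow> c (\<lambda>x. a * f x) = \<bar>a\<bar> * c f"
  and c_nonneg: "f \<in> L \<Longrightarrow> 0 \<le> c f"
  and c_mono: "f \<in> L \<Longrightarrow> g \<in> L \<Longrightarrow> (\<And>x. \<bar>f x\<bar> \<le> \<bar>g x\<bar>) \<Longrightarrow> c f \<le> c g"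
  and c_Daniell: "(\<And>n. F n \<in> L) \<Longrightarrow> (\<And>n x. F (Suc n) x \<le> F n x) \<Longrightarrow>
     (\<And>x. (\<lambda>n. F n x) \<longlonglongrightarrow> 0) \<Longrightarrow> (INF n. c (F n)) = 0"
  using capacity unfolding capacity_def by blast+

lemma c_zero: "c (\<lambda>x. 0) = 0"
  using c_scale[OF L_const, of 0 0] by simp

lemma cap_ext_le:
  assumes "f \<in> L"
  shows "cap_ext L c f \<le> ereal (c (\<lambda>x. \<bar>f x\<bar>))"
proof -
  have "open {x. t < ereal \<bar>f x\<bar>}" for t
    using L_continuous[OF assms]
    by (intro open_Collect_less continuous_intros continuous_on_ereal) auto
  then have "cap_ext L c f \<le> cap_lsc L c (\<lambda>x. ereal \<bar>f x\<bar>)"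
    unfolding cap_ext_def lsc_def by (intro INF_lower) auto
  also have "\<dots> \<le> ereal (c (\<lambda>x. \<bar>f x\<bar>))"
    unfolding cap_lsc_def using assms by (intro SUP_least) (auto intro!: c_mono L_abs)
  finally show ?thesis .
qed

lemma L_subset_L1_dom: "L \<subseteq> L1_dom L c"
proof
  fix f
  assume "f \<in> L"
  have "cap_ext L c (\<lambda>x. f x - f x) \<le> ereal (c (\<lambda>x. \<bar>f x - f x\<bar>))"
    by (rule cap_ext_le[OF L_diff[OF \<open>f \<in> L\<close> \<open>f \<in> L\<close>]])
  then have "cap_ext L c (\<lambda>x. f x - f x) \<le> ereal 0"
    using c_zero by simp
  then have "cap_ext L c (\<lambda>x. f x - f x) < ereal e" if "e > 0" for e
    using that by (auto intro: le_less_trans)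
  moreover have "cap_ext L c f < \<infinity>"
    using cap_ext_le[OF \<open>f \<in> L\<close>] by (rule le_less_trans) simp
  ultimately show "f \<in> L1_dom L c"
    unfolding L1_dom_def using \<open>f \<in> L\<close> by blast
qed

lemma L1_dom_diff:
  assumes "g \<in> L1_dom L c" "f \<in> L" "cap_ext L c (\<lambda>x. g x - f x) < \<infinity>"
  shows "(\<lambda>x. g x - f x) \<in> L1_dom L c"
proof -
  have "\<exists>h\<in>L. cap_ext L c (\<lambda>x. g x - f x - h x) < ereal e" if e: "e > 0" for e
  proof -
    obtain h where h: "h \<in> L" "cap_ext L c (\<lambda>x. g x - h x) < ereal e"
      using assms(1) e unfolding L1_dom_def by blast
    then have "(\<lambda>x. h x - f x) \<in> L" "cap_ext L c (\<lambda>x. g x - f x - (h x - f x)) < ereal e"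
      using assms(2) by (simp_all add: L_diff)
    then show ?thesis
      by (intro bexI[of _ "\<lambda>x. h x - f x"]) simp_all
  qed
  then show ?thesis
    using assms(3) unfolding L1_dom_def by blast
qed

lemma Kplus_lipschitz:
  assumes "\<phi> \<in> Kplus L c" "g \<in> L1_dom L c" "f \<in> L" "cap_ext L c (\<lambda>x. g x - f x) < \<infinity>"
  shows "ereal \<bar>\<phi> (L1_class L c g) - \<phi> (L1_class L c f)\<bar> \<le> cap_ext L c (\<lambda>x. g x - f x)"
proof -
  have "\<phi> (L1_class L c (\<lambda>x. 1 * g x + (-1) * f x)) =
      1 * \<phi> (L1_class L c g) + (-1) * \<phi> (L1_class L c f)"
    using L_subset_L1_dom assms(3) by (intro Kplus_linear[OF assms(1,2)]) blast
  then show ?thesis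
    using Kplus_bounded[OF assms(1) L1_dom_diff[OF assms(2-4)]] by simp
qed

lemma approximation_in_capacity:
  assumes "countable D" "D \<subseteq> L"
    and "\<And>d e. d \<in> D \<Longrightarrow> e \<in> D \<Longrightarrow> (\<lambda>y. min (d y) (e y)) \<in> D"
    and "\<And>x \<epsilon>. \<epsilon> > 0 \<Longrightarrow> \<exists>d\<in>D. (\<forall>y. f y \<le> d y) \<and> d x < f x + \<epsilon>"
    and "f \<in> L" "\<epsilon> > 0"
  shows "\<exists>d\<in>D. c (\<lambda>y. \<bar>d y - f y\<bar>) < \<epsilon>"
proof -
  obtain d where d: "\<And>n. d n \<in> D" "\<And>n y. f y \<le> d n y" "\<And>n y. d (Suc n) y \<le> d n y"
    "\<And>y. (\<lambda>n. d n y) \<longlonglongrightarrow> f y"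
    using decreasing_approximation_from_above[OF assms(1,3,4)] by blast
  define F where "F n y = \<bar>d n y - f y\<bar>" for n y
  have F_L: "F n \<in> L" for n
  proof -
    have "d n \<in> L"
      using d(1) assms(2) by blast
    then show ?thesis
      unfolding F_def by (intro L_abs L_diff assms(5))
  qed
  have "(INF n. c (F n)) = 0"
  proof (rule c_Daniell[OF F_L])
    show "F (Suc n) y \<le> F n y" for n y
      using d(2)[of y n] d(2)[of y "Suc n"] d(3)[of n y] by (simp add: F_def)
    show "(\<lambda>n. F n y) \<longlonglongrightarrow> 0" for y
      unfolding F_def by (intro tendsto_rabs_zero LIM_zero d(4))
  qed
  moreover have "bdd_below (range (\<lambda>n. c (F n)))"
    using c_nonneg F_L by (intro bdd_belowI[where m = 0]) auto
  ultimately obtain n where "c (F n) < \<epsilon>"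
    using cINF_less_iff[of UNIV "\<lambda>n. c (F n)" \<epsilon>] assms(6) by auto
  then show ?thesis
    using d(1) unfolding F_def by blast
qed

lemma Kplus_eq_if_approximable:
  assumes "\<phi> \<in> Kplus L c" "\<psi> \<in> Kplus L c" "g \<in> L1_dom L c"
    and approx: "\<And>e. e > 0 \<Longrightarrow>
       \<exists>f\<in>L. cap_ext L c (\<lambda>x. g x - f x) < ereal e \<and> \<phi> (L1_class L c f) = \<psi> (L1_class L c f)"
  shows "\<phi> (L1_class L c g) = \<psi> (L1_class L c g)"
proof -
  have "\<bar>\<phi> (L1_class L c g) - \<psi> (L1_class L c g)\<bar> \<le> 0 + e" if "e > 0" for e
  proof -
    obtain f where f: "f \<in> L" "cap_ext L c (\<lambda>x. g x - f x) < ereal (e / 2)"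
      and agree: "\<phi> (L1_class L c f) = \<psi> (L1_class L c f)"
      using approx[of "e / 2"] \<open>e > 0\<close> by auto
    have "\<bar>\<theta> (L1_class L c g) - \<theta> (L1_class L c f)\<bar> < e / 2" if "\<theta> \<in> Kplus L c" for \<theta>
    proof -
      have "cap_ext L c (\<lambda>x. g x - f x) < \<infinity>"
        using f(2) by (rule less_trans) simp
      with Kplus_lipschitz[OF that assms(3) f(1)] f(2)
      have "ereal \<bar>\<theta> (L1_class L c g) - \<theta> (L1_class L c f)\<bar> < ereal (e / 2)"
        by (blast intro: le_less_trans)
      then show ?thesis
        by simp
    qed
    from this[OF assms(1)] this[OF assms(2)] agree show ?thesis
      by linarith
  qed
  then have "\<bar>\<phi> (L1_class L c g) - \<psi> (L1_class L c g)\<bar> \<le> 0"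
    by (rule field_le_epsilon)
  then show ?thesis
    by simp
qed

lemma Kplus_eq_if_eq_on_dense:
  assumes "\<phi> \<in> Kplus L c" "\<psi> \<in> Kplus L c" "D \<subseteq> L"
    and dense: "\<And>f \<epsilon>. f \<in> L \<Longrightarrow> \<epsilon> > 0 \<Longrightarrow> \<exists>d\<in>D. c (\<lambda>y. \<bar>d y - f y\<bar>) < \<epsilon>"
    and agree: "\<And>d. d \<in> D \<Longrightarrow> \<phi> (L1_class L c d) = \<psi> (L1_class L c d)"
  shows "\<phi> = \<psi>"
proof -
  have on_L: "\<phi> (L1_class L c f) = \<psi> (L1_class L c f)" if f: "f \<in> L" for f
  proof (rule Kplus_eq_if_approximable[OF assms(1,2)])
    show "f \<in> L1_dom L c"
      using f L_subset_L1_dom by blast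
    fix e :: real
    assume "e > 0"
    then obtain d where d: "d \<in> D" "c (\<lambda>y. \<bar>d y - f y\<bar>) < e"
      using dense[OF f] by blast
    then have "d \<in> L"
      using assms(3) by blast
    have "cap_ext L c (\<lambda>y. f y - d y) \<le> ereal (c (\<lambda>y. \<bar>f y - d y\<bar>))"
      by (rule cap_ext_le[OF L_diff[OF f \<open>d \<in> L\<close>]])
    also have "\<dots> < ereal e"
      using d(2) by (simp add: abs_minus_commute)
    finally show "\<exists>d\<in>L. cap_ext L c (\<lambda>y. f y - d y) < ereal e \<and>
        \<phi> (L1_class L c d) = \<psi> (L1_class L c d)"
      using \<open>d \<in> L\<close> agree[OF d(1)] by blast
  qed
  show ?thesis
  proof
    fix X
    show "\<phi> X = \<psi> X"
    proof (cases "X \<in> L1 L c")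
      case True
      then obtain g where g: "g \<in> L1_dom L c" "X = L1_class L c g"
        by (rule L1E)
      show ?thesis
        unfolding g(2)
      proof (rule Kplus_eq_if_approximable[OF assms(1,2) g(1)])
        fix e :: real
        assume "e > 0"
        then obtain f where "f \<in> L" "cap_ext L c (\<lambda>x. g x - f x) < ereal e"
          using g(1) unfolding L1_dom_def by blast
        then show "\<exists>f\<in>L. cap_ext L c (\<lambda>x. g x - f x) < ereal e \<and>
            \<phi> (L1_class L c f) = \<psi> (L1_class L c f)"
          using on_L by blast
      qed
    next
      case False
      then show ?thesis
        using Kplus_extensional[OF assms(1)] Kplus_extensional[OF assms(2)] by (simp add: extensional_def)
    qed
  qed
qed

end

lemma metrizable_space_Kplus:
  fixes L :: "('a::second_countable_topology \<Rightarrow> real) set"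
  assumes "admissible_space L" "capacity L c"
  shows "metrizable_space (subtopology (weak_star L c) (Kplus L c))"
proof -
  interpret lattice_capacity L c
    using assms by (intro lattice_capacity.intro admissible_lattice.intro lattice_capacity_axioms.intro)
  obtain D where D: "countable D" "D \<subseteq> L"
    "\<And>d e. d \<in> D \<Longrightarrow> e \<in> D \<Longrightarrow> (\<lambda>y. min (d y) (e y)) \<in> D"
    "\<And>f x \<epsilon>. f \<in> L \<Longrightarrow> \<epsilon> > 0 \<Longrightarrow> \<exists>d\<in>D. (\<forall>y. f y \<le> d y) \<and> d x < f x + \<epsilon>"
    using countable_approximating_sublattice[OF assms(1)] by blast
  let ?K = "subtopology (weak_star L c) (Kplus L c)"
  define eval_D where "eval_D \<phi> = (\<lambda>d\<in>D. \<phi> (L1_class L c d))" for \<phi> :: "('a \<Rightarrow> real) set \<Rightarrow> real"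
  have "compact_space ?K"
    using compactin_Kplus by (rule compact_space_subtopology)
  moreover have "metrizable_space (product_topology (\<lambda>_. euclideanreal) D)"
    using D(1) by (simp add: metrizable_space_product_topology metrizable_space_euclidean)
  moreover have "continuous_map ?K (product_topology (\<lambda>_. euclideanreal) D) eval_D"
    unfolding eval_D_def continuous_map_componentwise
    by (auto intro: continuous_map_from_subtopology continuous_map_weak_star_eval)
  moreover have "inj_on eval_D (topspace ?K)"
  proof (rule inj_onI)
    fix \<phi> \<psi>
    assume "\<phi> \<in> topspace ?K" "\<psi> \<in> topspace ?K" and eq: "eval_D \<phi> = eval_D \<psi>"
    then have "\<phi> \<in> Kplus L c" "\<psi> \<in> Kplus L c"
      by auto
    moreover have "\<phi> (L1_class L c d) = \<psi> (L1_class L c d)" if "d \<in> D" for d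
      using fun_cong[OF eq, of d] that unfolding eval_D_def by simp
    moreover have "\<exists>d\<in>D. c (\<lambda>y. \<bar>d y - f y\<bar>) < \<epsilon>" if "f \<in> L" "\<epsilon> > 0" for f \<epsilon>
      using approximation_in_capacity[OF D(1-3) D(4)[OF that(1)] that] by blast
    ultimately show "\<phi> = \<psi>"
      using Kplus_eq_if_eq_on_dense D(2) by blast
  qed
  ultimately show ?thesis
    by (rule continuous_injection_imp_metrizable_space)
qed

theorem corollary2p9:
  fixes L :: "('a::polish_space \<Rightarrow> real) set"
    and c :: "('a \<Rightarrow> real) \<Rightarrow> real"
  assumes "admissible_space L"
    and "capacity L c"
  shows "compactin (weak_star L c) (Kplus L c) \<and>
         metrizable_space (subtopology (weak_star L c) (Kplus L c))"
  using compactin_Kplus metrizable_space_Kplus[OF assms] by blast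

end
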